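(* Let $G$ be a connected graph with $n\ge 2$ nodes and diameter $D$, with nonnegative real loads, and run Algorithm 1 (described in the context). If the discrepancy of $G$ at the beginning of some round is $K$, then after that round the potential $p(G)$ has decreased by at least $K^2/(2D)$.
   Context: $G=(V,E)$ is an undirected connected graph, $n=|V|$, $D$ its diameter; each node $u$ holds a load $load(u)\ge 0$ (real). $L_{max},L_{min}$ denote the current maximum and minimum load, the discrepancy is $K=L_{max}-L_{min}$, $L_{avg}$ the average load (invariant under transfers), and the potential is $p(G)=\sum_{u\in V}(load(u)-L_{avg})^2$. Algorithm 1 (single proposal, continuous) proceeds in synchronous rounds; in each round, using the loads at the start of the round: (1) every node $u$ having at least one neighbor with strictly smaller load picks a neighbor $v$ maximizing $load(u)-load(v)$ (ties broken arbitrarily) and sends $v$ a proposal of value $p_{uv}=(load(u)-load(v))/2$; (2) every node that received at least one proposal accepts exactly one proposal of maximum value (ties arbitrary); (3) all accepted transfers are executed simultaneously (each accepted proposal $p_{wu}$ moves $p_{wu}$ from $w$ to $u$), and nodes report their new loads to neighbors. Thus each node gives load in at most one transfer and receives in at most one transfer per round. *)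

theory Defs
  imports Complex_Main
begin

definition graph :: "'a set \<Rightarrow> ('a \<Rightarrow> 'a \<Rightarrow> bool) \<Rightarrow> bool" where
  "graph V E \<longleftrightarrow> finite V \<and> (\<forall>u v. E u v \<longrightarrow> u \<in> V \<and> v \<in> V)
     \<and> (\<forall>u v. E u v \<longrightarrow> E v u) \<and> (\<forall>u. \<not> E u u)"

definition walk_len :: "('a \<Rightarrow> 'a \<Rightarrow> bool) \<Rightarrow> nat \<Rightarrow> 'a \<Rightarrow> 'a \<Rightarrow> bool" where
  "walk_len E k u v \<longleftrightarrow> (u, v) \<in> {(x, y). E x y} ^^ k"

definition connected_graph :: "'a set \<Rightarrow> ('a \<Rightarrow> 'a \<Rightarrow> bool) \<Rightarrow> bool" where
  "connected_graph V E \<longleftrightarrow> (\<forall>u\<in>V. \<forall>v\<in>V. \<exists>k. walk_len E k u v)"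

definition gdist :: "('a \<Rightarrow> 'a \<Rightarrow> bool) \<Rightarrow> 'a \<Rightarrow> 'a \<Rightarrow> nat" where
  "gdist E u v = (LEAST k. walk_len E k u v)"

definition diameter :: "'a set \<Rightarrow> ('a \<Rightarrow> 'a \<Rightarrow> bool) \<Rightarrow> nat" where
  "diameter V E = Max {gdist E u v | u v. u \<in> V \<and> v \<in> V}"

definition avg_load :: "'a set \<Rightarrow> ('a \<Rightarrow> real) \<Rightarrow> real" where
  "avg_load V load = (\<Sum>u\<in>V. load u) / real (card V)"

definition potential :: "'a set \<Rightarrow> ('a \<Rightarrow> real) \<Rightarrow> real" where
  "potential V load = (\<Sum>u\<in>V. (load u - avg_load V load)^2)"

definition discrepancy :: "'a set \<Rightarrow> ('a \<Rightarrow> real) \<Rightarrow> real" where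
  "discrepancy V load = Max (load ` V) - Min (load ` V)"

definition valid_proposals ::
  "'a set \<Rightarrow> ('a \<Rightarrow> 'a \<Rightarrow> bool) \<Rightarrow> ('a \<Rightarrow> real) \<Rightarrow> ('a \<Rightarrow> 'a option) \<Rightarrow> bool" where
  "valid_proposals V E load prop \<longleftrightarrow>
     (\<forall>u\<in>V.
        (if (\<exists>v. E u v \<and> load v < load u)
         then (\<exists>v. prop u = Some v \<and> E u v \<and>
                   (\<forall>w. E u w \<longrightarrow> load u - load w \<le> load u - load v))
         else prop u = None))"

text \<open>Step (2): each node that received at least one proposal accepts exactly one
  of maximum value (ties arbitrary); acc u = Some w means u accepts w's proposal.\<close>
definition valid_acceptance ::
  "'a set \<Rightarrow> ('a \<Rightarrow> real) \<Rightarrow> ('a \<Rightarrow> 'a option) \<Rightarrow> ('a \<Rightarrow> 'a option) \<Rightarrow> bool" where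
  "valid_acceptance V load prop acc \<longleftrightarrow>
     (\<forall>u\<in>V.
        (if (\<exists>w\<in>V. prop w = Some u)
         then (\<exists>w\<in>V. acc u = Some w \<and> prop w = Some u \<and>
                 (\<forall>w'\<in>V. prop w' = Some u \<longrightarrow>
                     (load w' - load u) / 2 \<le> (load w - load u) / 2))
         else acc u = None))"

definition execute_round ::
  "'a set \<Rightarrow> ('a \<Rightarrow> real) \<Rightarrow> ('a \<Rightarrow> 'a option) \<Rightarrow> 'a \<Rightarrow> real" where
  "execute_round V load acc u =
     load u
     + (\<Sum>w\<in>V. if acc u = Some w then (load w - load u) / 2 else 0)
     - (\<Sum>v\<in>V. if acc v = Some u then (load u - load v) / 2 else 0)"

definition alg1_round ::
  "'a set \<Rightarrow> ('a \<Rightarrow> 'a \<Rightarrow> bool) \<Rightarrow> ('a \<Rightarrow> real) \<Rightarrow> ('a \<Rightarrow> real) \<Rightarrow> bool" where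
  "alg1_round V E load load' \<longleftrightarrow>
     (\<exists>prop acc. valid_proposals V E load prop \<and> valid_acceptance V load prop acc \<and>
        (\<forall>u\<in>V. load' u = execute_round V load acc u))"

end

theory Submission
  imports Defs "HOL-Analysis.Convex"
begin

text \<open>Write \<open>in(u)\<close> for the amount a node receives in the round. Since every node gives and
  receives at most once, the potential drops by \<open>2 \<Sum> in(u)\<^sup>2\<close> plus a nonnegative
  cross term. Along a shortest path from a maximum-load to a minimum-load node, each step
  down from a node \<open>z\<close> is bounded by \<open>2 in(w)\<close>, where \<open>w\<close> is the node \<open>z\<close> proposed to: \<open>w\<close> is a
  lightest neighbour of \<open>z\<close> and accepted a proposal at least as large as the one from \<open>z\<close>.
  Hence \<open>K\<close> is covered by the charges \<open>2 in(w)\<close> of at most \<open>D\<close> distinct nodes, and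
  Cauchy-Schwarz gives \<open>K\<^sup>2 \<le> 4 D \<Sum> in(w)\<^sup>2 \<le> 2 D\<close> times the potential drop.\<close>

definition inflow :: "'a set \<Rightarrow> ('a \<Rightarrow> real) \<Rightarrow> ('a \<Rightarrow> 'a option) \<Rightarrow> 'a \<Rightarrow> real" where
  "inflow V x acc u = (\<Sum>w\<in>V. if acc u = Some w then (x w - x u) / 2 else 0)"

definition outflow :: "'a set \<Rightarrow> ('a \<Rightarrow> real) \<Rightarrow> ('a \<Rightarrow> 'a option) \<Rightarrow> 'a \<Rightarrow> real" where
  "outflow V x acc u = (\<Sum>v\<in>V. if acc v = Some u then (x u - x v) / 2 else 0)"

lemma execute_round_eq_inflow_outflow:
  "execute_round V x acc u = x u + inflow V x acc u - outflow V x acc u"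
  unfolding execute_round_def inflow_def outflow_def by simp

lemma sum_inflow_eq_sum_outflow: "sum (inflow V x acc) V = sum (outflow V x acc) V"
  unfolding inflow_def outflow_def by (rule sum.swap)

lemma inflow_Some:
  assumes "finite V" "acc u = Some w" "w \<in> V"
  shows "inflow V x acc u = (x w - x u) / 2"
  using assms by (simp add: inflow_def)

lemma power2_sum_if_unique:
  fixes g :: "'b \<Rightarrow> real"
  assumes "finite V" and "\<And>v v'. v \<in> V \<Longrightarrow> v' \<in> V \<Longrightarrow> P v \<Longrightarrow> P v' \<Longrightarrow> v = v'"
  shows "(\<Sum>v\<in>V. if P v then g v else 0)\<^sup>2 = (\<Sum>v\<in>V. if P v then (g v)\<^sup>2 else 0)"
proof (cases "\<exists>v\<in>V. P v")
  case True
  then obtain v0 where v0: "v0 \<in> V" "P v0" by blast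
  with assms(2) have "\<And>v. v \<in> V \<Longrightarrow> P v \<longleftrightarrow> v = v0" by blast
  then have "(\<Sum>v\<in>V. if P v then h v else 0) = h v0" for h :: "'b \<Rightarrow> real"
    using v0 assms(1) by (simp cong: sum.cong)
  then show ?thesis by simp
qed (simp add: sum.neutral)

lemma inflow_power2:
  assumes "finite V"
  shows "(inflow V x acc v)\<^sup>2 = (\<Sum>u\<in>V. if acc v = Some u then ((x u - x v) / 2)\<^sup>2 else 0)"
  unfolding inflow_def using assms by (intro power2_sum_if_unique) auto

lemma outflow_power2:
  assumes "finite V" "inj_on acc {v \<in> V. acc v \<noteq> None}"
  shows "(outflow V x acc u)\<^sup>2 = (\<Sum>v\<in>V. if acc v = Some u then ((x u - x v) / 2)\<^sup>2 else 0)"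
  unfolding outflow_def
  by (intro power2_sum_if_unique assms(1)) (auto intro: inj_onD[OF assms(2)])

lemma sum_outflow_power2_eq:
  assumes "finite V" "inj_on acc {v \<in> V. acc v \<noteq> None}"
  shows "(\<Sum>u\<in>V. (outflow V x acc u)\<^sup>2) = (\<Sum>u\<in>V. (inflow V x acc u)\<^sup>2)"
  using assms by (simp add: outflow_power2 inflow_power2) (rule sum.swap)

lemma sum_times_net_outflow:
  assumes "finite V"
  shows "(\<Sum>u\<in>V. x u * (outflow V x acc u - inflow V x acc u))
           = 2 * (\<Sum>u\<in>V. (inflow V x acc u)\<^sup>2)"
proof -
  have out: "(\<Sum>u\<in>V. x u * outflow V x acc u)
          = (\<Sum>v\<in>V. \<Sum>u\<in>V. if acc v = Some u then x u * (x u - x v) / 2 else 0)"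
    unfolding outflow_def sum_distrib_left
    by (subst sum.swap) (intro sum.cong refl, simp)
  have into: "(\<Sum>v\<in>V. x v * inflow V x acc v)
          = (\<Sum>v\<in>V. \<Sum>u\<in>V. if acc v = Some u then x v * (x u - x v) / 2 else 0)"
    unfolding inflow_def sum_distrib_left by (intro sum.cong refl) simp
  have "(\<Sum>u\<in>V. x u * (outflow V x acc u - inflow V x acc u))
      = (\<Sum>u\<in>V. x u * outflow V x acc u) - (\<Sum>v\<in>V. x v * inflow V x acc v)"
    by (simp add: right_diff_distrib sum_subtractf)
  also have "\<dots> = (\<Sum>v\<in>V. 2 * (\<Sum>u\<in>V. if acc v = Some u then ((x u - x v) / 2)\<^sup>2 else 0))"
    unfolding out into sum_subtractf[symmetric] sum_distrib_left
    by (intro sum.cong refl) (simp add: power2_eq_square field_simps)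
  also have "\<dots> = 2 * (\<Sum>u\<in>V. (inflow V x acc u)\<^sup>2)"
    using assms by (simp add: inflow_power2 sum_distrib_left)
  finally show ?thesis .
qed

lemma potential_eq_sum_power2:
  assumes "finite V"
  shows "potential V x = (\<Sum>u\<in>V. (x u)\<^sup>2) - (\<Sum>u\<in>V. x u)\<^sup>2 / real (card V)"
proof (cases "V = {}")
  case False
  with assms have card: "real (card V) > 0" by (simp add: card_gt_0_iff)
  have "potential V x = (\<Sum>u\<in>V. (x u)\<^sup>2 - 2 * avg_load V x * x u + (avg_load V x)\<^sup>2)"
    unfolding potential_def by (intro sum.cong refl) (simp add: power2_diff)
  also have "\<dots> = (\<Sum>u\<in>V. (x u)\<^sup>2) - 2 * avg_load V x * (\<Sum>u\<in>V. x u)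
                    + real (card V) * (avg_load V x)\<^sup>2"
    by (simp add: sum.distrib sum_subtractf sum_distrib_left)
  also have "\<dots> = (\<Sum>u\<in>V. (x u)\<^sup>2) - (\<Sum>u\<in>V. x u)\<^sup>2 / real (card V)"
    using card unfolding avg_load_def by (simp add: field_simps power2_eq_square)
  finally show ?thesis .
qed (simp add: potential_def)

lemma potential_execute_round_drop:
  assumes fin: "finite V"
    and uphill: "\<forall>u\<in>V. \<forall>w. acc u = Some w \<longrightarrow> x u \<le> x w"
    and inj: "inj_on acc {v \<in> V. acc v \<noteq> None}"
    and y: "\<forall>u\<in>V. y u = execute_round V x acc u"
  shows "2 * (\<Sum>u\<in>V. (inflow V x acc u)\<^sup>2) \<le> potential V x - potential V y"
proof -
  define r g where "r = inflow V x acc" and "g = outflow V x acc"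
  have y_eq: "y u = x u + r u - g u" if "u \<in> V" for u
    using y that by (simp add: r_def g_def execute_round_eq_inflow_outflow)
  have "0 \<le> r u" "0 \<le> g u" if "u \<in> V" for u
    using uphill that unfolding r_def g_def inflow_def outflow_def by (auto intro!: sum_nonneg)
  then have cross: "0 \<le> (\<Sum>u\<in>V. r u * g u)"
    by (simp add: sum_nonneg)
  have "(\<Sum>u\<in>V. y u) = (\<Sum>u\<in>V. x u) + sum r V - sum g V"
    by (simp add: y_eq sum.distrib sum_subtractf cong: sum.cong)
  then have same_sum: "(\<Sum>u\<in>V. y u) = (\<Sum>u\<in>V. x u)"
    by (simp add: r_def g_def sum_inflow_eq_sum_outflow)
  have "potential V x - potential V y = (\<Sum>u\<in>V. (x u)\<^sup>2) - (\<Sum>u\<in>V. (y u)\<^sup>2)"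
    using fin by (simp add: potential_eq_sum_power2 same_sum)
  also have "\<dots> = (\<Sum>u\<in>V. 2 * (x u * (g u - r u)) - (r u)\<^sup>2 - (g u)\<^sup>2 + 2 * (r u * g u))"
    unfolding sum_subtractf[symmetric]
    by (intro sum.cong refl) (simp add: y_eq power2_eq_square algebra_simps)
  also have "\<dots> = 2 * (\<Sum>u\<in>V. x u * (g u - r u)) - (\<Sum>u\<in>V. (r u)\<^sup>2) - (\<Sum>u\<in>V. (g u)\<^sup>2)
                   + 2 * (\<Sum>u\<in>V. r u * g u)"
    by (simp add: sum.distrib sum_subtractf sum_distrib_left)
  also have "\<dots> = 2 * (\<Sum>u\<in>V. (r u)\<^sup>2) + 2 * (\<Sum>u\<in>V. r u * g u)"
    using fin inj by (simp add: r_def g_def sum_times_net_outflow sum_outflow_power2_eq)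
  finally show ?thesis using cross unfolding r_def g_def by simp
qed

text \<open>A node may be proposed to from several nodes of the walk; this invariant lets all of
  them be paid for by a single copy of its charge.\<close>

definition charges_cover :: "('a \<Rightarrow> real) \<Rightarrow> ('a \<Rightarrow> real) \<Rightarrow> 'a set \<Rightarrow> real \<Rightarrow> bool" where
  "charges_cover x a R t \<longleftrightarrow> (\<forall>w\<in>R. x w - t \<le> sum a (R - {w}))"

lemma charges_cover_empty: "charges_cover x a {} t"
  by (simp add: charges_cover_def)

lemma charges_cover_insert:
  assumes cover: "charges_cover x a R t" and "finite R" "w \<notin> R" "0 \<le> a w"
    and "x w - t \<le> sum a R"
  shows "charges_cover x a (insert w R) t"
proof -
  have "sum a (R - {v}) \<le> sum a (insert w R - {v})" if "v \<in> R" for v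
    using that assms(2-4) by (auto simp: insert_Diff_if)
  with cover assms(3,5) show ?thesis
    unfolding charges_cover_def by (auto intro: order_trans)
qed

lemma charges_cover_le_sum:
  assumes "charges_cover x a R t" "finite R" "w \<in> R" "x z \<le> x w + a w"
  shows "x z - t \<le> sum a R"
  using assms unfolding charges_cover_def by (auto simp: sum.remove)

lemma walk_drop_le_charges:
  fixes x a :: "'a \<Rightarrow> real" and pr :: "'a \<Rightarrow> 'a option" and f :: "nat \<Rightarrow> 'a"
  assumes fin: "finite V"
    and walk: "\<forall>i<L. f i \<in> V \<and> E (f i) (f (Suc i))"
    and idle: "\<forall>z\<in>V. pr z = None \<longrightarrow> (\<forall>y. E z y \<longrightarrow> x z \<le> x y)"
    and proposal: "\<forall>z\<in>V. \<forall>w. pr z = Some w \<longrightarrow>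
                     w \<in> V \<and> (\<forall>y. E z y \<longrightarrow> x w \<le> x y) \<and> x z \<le> x w + a w"
    and charge_nonneg: "\<forall>w\<in>V. 0 \<le> a w"
  shows "\<exists>R\<subseteq>V. card R \<le> L \<and> x (f 0) - x (f L) \<le> sum a R"
proof -
  have "\<exists>R\<subseteq>V. card R \<le> L - s \<and> x (f s) - x (f L) \<le> sum a R \<and> charges_cover x a R (x (f L))"
    if "s \<le> L" for s
    using that
  proof (induction rule: inc_induct)
    case base
    show ?case by (intro exI[of _ "{}"]) (simp add: charges_cover_empty)
  next
    case (step n)
    then obtain R where R: "R \<subseteq> V" "card R \<le> L - Suc n" "x (f (Suc n)) - x (f L) \<le> sum a R"
      and cover: "charges_cover x a R (x (f L))"
      by blast
    have finR: "finite R" using R(1) fin by (rule finite_subset)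
    have nV: "f n \<in> V" and nE: "E (f n) (f (Suc n))" using walk step.hyps(2) by auto
    show ?case
    proof (cases "pr (f n)")
      case None
      with idle nV nE have "x (f n) \<le> x (f (Suc n))" by blast
      with R cover show ?thesis by (intro exI[of _ R]) auto
    next
      case (Some w)
      with proposal nV nE have wV: "w \<in> V" and down: "x w \<le> x (f (Suc n))"
        and up: "x (f n) \<le> x w + a w"
        by blast+
      show ?thesis
      proof (cases "w \<in> R")
        case True
        with R cover finR up show ?thesis
          by (intro exI[of _ R]) (auto intro: charges_cover_le_sum)
      next
        case False
        have "charges_cover x a (insert w R) (x (f L))"
          using cover finR False charge_nonneg wV R(3) down by (intro charges_cover_insert) auto
        moreover have "card (insert w R) \<le> L - n"
          using False finR R(2) step.hyps(2) by simp
        moreover have "x (f n) - x (f L) \<le> sum a (insert w R)"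
          using False finR R(3) down up by simp
        ultimately show ?thesis using R(1) wV by (intro exI[of _ "insert w R"]) auto
      qed
    qed
  qed
  from this[OF le0] show ?thesis
    unfolding diff_zero by blast
qed

lemma walk_drop_power2_le:
  fixes x a :: "'a \<Rightarrow> real" and pr :: "'a \<Rightarrow> 'a option" and f :: "nat \<Rightarrow> 'a"
  assumes fin: "finite V"
    and walk: "\<forall>i<L. f i \<in> V \<and> E (f i) (f (Suc i))"
    and idle: "\<forall>z\<in>V. pr z = None \<longrightarrow> (\<forall>y. E z y \<longrightarrow> x z \<le> x y)"
    and proposal: "\<forall>z\<in>V. \<forall>w. pr z = Some w \<longrightarrow>
                     w \<in> V \<and> (\<forall>y. E z y \<longrightarrow> x w \<le> x y) \<and> x z \<le> x w + a w"
    and charge_nonneg: "\<forall>w\<in>V. 0 \<le> a w"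
    and downhill: "x (f L) \<le> x (f 0)"
  shows "(x (f 0) - x (f L))\<^sup>2 \<le> real L * (\<Sum>w\<in>V. (a w)\<^sup>2)"
proof -
  obtain R where R: "R \<subseteq> V" "card R \<le> L" "x (f 0) - x (f L) \<le> sum a R"
    using walk_drop_le_charges[OF fin walk idle proposal charge_nonneg] by blast
  have "(x (f 0) - x (f L))\<^sup>2 \<le> (sum a R)\<^sup>2"
    using R(3) downhill by (intro power_mono) auto
  also have "\<dots> \<le> (\<Sum>w\<in>R. (a w)\<^sup>2) * real (card R)"
    by (rule sum_squared_le_sum_of_squares)
  also have "\<dots> \<le> (\<Sum>w\<in>V. (a w)\<^sup>2) * real L"
    using R(1,2) fin by (intro mult_mono sum_mono2 sum_nonneg) auto
  finally show ?thesis by (simp add: mult.commute)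
qed

lemma valid_proposals_SomeD:
  assumes "valid_proposals V E x pr" "z \<in> V" "pr z = Some w"
  shows "E z w" "\<forall>y. E z y \<longrightarrow> x w \<le> x y" "x w < x z"
proof -
  have spec: "if \<exists>v. E z v \<and> x v < x z
      then \<exists>v. pr z = Some v \<and> E z v \<and> (\<forall>y. E z y \<longrightarrow> x z - x y \<le> x z - x v)
      else pr z = None"
    using assms(1,2) unfolding valid_proposals_def by blast
  with assms(3) obtain v where v: "E z v" "x v < x z"
    by (auto split: if_splits)
  then have "\<exists>v. E z v \<and> x v < x z" by blast
  with spec assms(3) show "E z w" "\<forall>y. E z y \<longrightarrow> x w \<le> x y"
    by (auto simp only: if_True option.inject)
  with v show "x w < x z" by force
qed

lemma valid_proposals_NoneD:
  assumes "valid_proposals V E x pr" "z \<in> V" "pr z = None" "E z y"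
  shows "x z \<le> x y"
  using assms unfolding valid_proposals_def by (metis not_less option.distinct(1))

lemma valid_acceptance_SomeD:
  assumes "valid_acceptance V x pr acc" "u \<in> V" "acc u = Some w"
  shows "w \<in> V" "pr w = Some u"
  using assms unfolding valid_acceptance_def by (metis option.distinct(1) option.inject)+

lemma valid_acceptance_proposed:
  assumes "valid_acceptance V x pr acc" "u \<in> V" "z \<in> V" "pr z = Some u"
  obtains w where "w \<in> V" "acc u = Some w" "x z \<le> x w"
proof -
  have "if \<exists>w\<in>V. pr w = Some u
      then \<exists>w\<in>V. acc u = Some w \<and> pr w = Some u \<and>
             (\<forall>w'\<in>V. pr w' = Some u \<longrightarrow> (x w' - x u) / 2 \<le> (x w - x u) / 2)
      else acc u = None"
    using assms(1,2) unfolding valid_acceptance_def by blast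
  with assms(3,4) obtain w where "w \<in> V" "acc u = Some w" "(x z - x u) / 2 \<le> (x w - x u) / 2"
    by (auto split: if_splits)
  then show ?thesis using that by simp
qed

lemma alg1_round_charging:
  assumes graph: "graph V E" and round: "alg1_round V E x y"
  obtains pr a where
    "(\<Sum>u\<in>V. (a u)\<^sup>2) \<le> 2 * (potential V x - potential V y)"
    "\<forall>w\<in>V. 0 \<le> a w"
    "\<forall>z\<in>V. pr z = None \<longrightarrow> (\<forall>v. E z v \<longrightarrow> x z \<le> x v)"
    "\<forall>z\<in>V. \<forall>w. pr z = Some w \<longrightarrow>
       w \<in> V \<and> (\<forall>v. E z v \<longrightarrow> x w \<le> x v) \<and> x z \<le> x w + a w"
proof -
  have fin: "finite V" and edges_in_V: "\<And>u v. E u v \<Longrightarrow> v \<in> V"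
    using graph unfolding graph_def by auto
  obtain pr acc where props: "valid_proposals V E x pr"
    and accs: "valid_acceptance V x pr acc"
    and y: "\<forall>u\<in>V. y u = execute_round V x acc u"
    using round unfolding alg1_round_def by blast
  have uphill: "\<forall>u\<in>V. \<forall>w. acc u = Some w \<longrightarrow> x u \<le> x w"
    using valid_acceptance_SomeD[OF accs] valid_proposals_SomeD(3)[OF props] by fastforce
  have "inj_on acc {v \<in> V. acc v \<noteq> None}"
  proof (rule inj_onI)
    fix v v' assume "v \<in> {v \<in> V. acc v \<noteq> None}" "v' \<in> {v \<in> V. acc v \<noteq> None}"
      and "acc v = acc v'"
    then obtain w where "v \<in> V" "v' \<in> V" "acc v = Some w" "acc v' = Some w" by auto
    then have "pr w = Some v" "pr w = Some v'" using valid_acceptance_SomeD(2)[OF accs] by blast+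
    then show "v = v'" by simp
  qed
  from potential_execute_round_drop[OF fin uphill this y]
  have "(\<Sum>u\<in>V. (2 * inflow V x acc u)\<^sup>2) \<le> 2 * (potential V x - potential V y)"
    by (simp add: power_mult_distrib flip: sum_distrib_left)
  moreover have "\<forall>w\<in>V. 0 \<le> 2 * inflow V x acc w"
    using uphill unfolding inflow_def by (auto intro!: sum_nonneg)
  moreover have "\<forall>z\<in>V. pr z = None \<longrightarrow> (\<forall>v. E z v \<longrightarrow> x z \<le> x v)"
    using valid_proposals_NoneD[OF props] by blast
  moreover have "w \<in> V \<and> (\<forall>v. E z v \<longrightarrow> x w \<le> x v) \<and> x z \<le> x w + 2 * inflow V x acc w"
    if z: "z \<in> V" "pr z = Some w" for z w
  proof -
    have wV: "w \<in> V" using valid_proposals_SomeD(1)[OF props z] edges_in_V by blast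
    obtain u where "u \<in> V" "acc w = Some u" "x z \<le> x u"
      using valid_acceptance_proposed[OF accs wV z] .
    moreover from this fin have "inflow V x acc w = (x u - x w) / 2" by (simp add: inflow_Some)
    ultimately have "x z \<le> x w + 2 * inflow V x acc w" by simp
    with wV show ?thesis using valid_proposals_SomeD(2)[OF props z] by blast
  qed
  ultimately show ?thesis by (intro that[of "\<lambda>u. 2 * inflow V x acc u" pr]) blast+
qed

lemma discrepancy_attained:
  fixes x :: "'a \<Rightarrow> real"
  assumes "finite V" "V \<noteq> {}"
  obtains u v where "u \<in> V" "v \<in> V" "discrepancy V x = x u - x v" "x v \<le> x u"
proof -
  have "Max (x ` V) \<in> x ` V" "Min (x ` V) \<in> x ` V" using assms by simp_all
  then obtain u v where u: "u \<in> V" "x u = Max (x ` V)" and v: "v \<in> V" "x v = Min (x ` V)"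
    by (metis imageE)
  have "x v \<le> x u" using assms u v by (simp add: Min_le)
  with u v show ?thesis using that unfolding discrepancy_def by simp
qed

lemma connected_graph_walk_le_diameter:
  assumes graph: "graph V E" and conn: "connected_graph V E" and "u \<in> V" "v \<in> V"
  obtains f L where "f 0 = u" "f L = v" "\<forall>i<L. f i \<in> V \<and> E (f i) (f (Suc i))"
    "L \<le> diameter V E"
proof -
  have fin: "finite V" and edges_in_V: "\<And>u v. E u v \<Longrightarrow> u \<in> V"
    using graph unfolding graph_def by auto
  have "\<exists>k. walk_len E k u v" using conn assms(3,4) unfolding connected_graph_def by blast
  then have "walk_len E (gdist E u v) u v" unfolding gdist_def by (rule LeastI_ex)
  then obtain f where f: "f 0 = u" "f (gdist E u v) = v"
      "\<forall>i<gdist E u v. E (f i) (f (Suc i))"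
    unfolding walk_len_def relpow_fun_conv by auto
  have "{gdist E u v |u v. u \<in> V \<and> v \<in> V} = (\<lambda>(u, v). gdist E u v) ` (V \<times> V)" by auto
  with fin have "finite {gdist E u v |u v. u \<in> V \<and> v \<in> V}" by simp
  with assms(3,4) have "gdist E u v \<le> diameter V E" unfolding diameter_def by (intro Max_ge) auto
  with f edges_in_V show ?thesis using that by blast
qed

theorem lemma2:
  fixes V :: "'a set" and E :: "'a \<Rightarrow> 'a \<Rightarrow> bool" and load load' :: "'a \<Rightarrow> real"
  assumes "graph V E"
    and "connected_graph V E"
    and "card V \<ge> 2"
    and "\<forall>u\<in>V. load u \<ge> 0"
    and "alg1_round V E load load'"
  shows "potential V load - potential V load'
           \<ge> (discrepancy V load)^2 / (2 * real (diameter V E))"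
proof -
  have fin: "finite V" using assms(1) unfolding graph_def by blast
  have "V \<noteq> {}" using assms(3) by auto
  obtain pr a where drop: "(\<Sum>u\<in>V. (a u)\<^sup>2) \<le> 2 * (potential V load - potential V load')"
    and charges: "\<forall>w\<in>V. 0 \<le> a w"
      "\<forall>z\<in>V. pr z = None \<longrightarrow> (\<forall>v. E z v \<longrightarrow> load z \<le> load v)"
      "\<forall>z\<in>V. \<forall>w. pr z = Some w \<longrightarrow>
         w \<in> V \<and> (\<forall>v. E z v \<longrightarrow> load w \<le> load v) \<and> load z \<le> load w + a w"
    by (rule alg1_round_charging[OF assms(1,5)])
  obtain u v where uv: "u \<in> V" "v \<in> V" "discrepancy V load = load u - load v" "load v \<le> load u"
    by (rule discrepancy_attained[OF fin \<open>V \<noteq> {}\<close>])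
  obtain f L where f: "f 0 = u" "f L = v" "\<forall>i<L. f i \<in> V \<and> E (f i) (f (Suc i))"
    and "L \<le> diameter V E"
    by (rule connected_graph_walk_le_diameter[OF assms(1,2) uv(1,2)])
  have "(discrepancy V load)\<^sup>2 \<le> real L * (\<Sum>w\<in>V. (a w)\<^sup>2)"
    using walk_drop_power2_le[OF fin f(3) charges(2,3,1)] f(1,2) uv(3,4) by simp
  also have "\<dots> \<le> real (diameter V E) * (2 * (potential V load - potential V load'))"
    using \<open>L \<le> diameter V E\<close> drop by (intro mult_mono sum_nonneg) auto
  finally have "(discrepancy V load)\<^sup>2 \<le> 2 * real (diameter V E) * (potential V load - potential V load')"
    by (simp add: algebra_simps)
  moreover have "0 \<le> potential V load - potential V load'"
    using drop sum_nonneg[of V "\<lambda>u. (a u)\<^sup>2"] by simp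
  ultimately show ?thesis by (cases "diameter V E = 0") (simp_all add: divide_le_eq mult.commute)
qed

end
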